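(* Let $\mathbb T=(\mathbb C^* )^d$ and let $D$ be a $\mathbb T$-equivariant, $\mathbb Z/2$-graded coherent sheaf on a point (i.e. a $\mathbb Z/2$-graded finite-dimensional $\mathbb T$-representation). For each $i\ge1$ let $D_i=D$ with the trivial $S_i$-equivariant structure. Let $\mathfrak A=\{A_1,\dots,A_l\}$ be a set partition of $[n]$ and $S_{\mathfrak A}\subseteq S_n$ the subgroup preserving $\mathfrak A$. If $[D]\neq0$ in $K_{\mathbb T}(\mathrm{pt})$, then $[D_{A_1}\otimes\cdots\otimes D_{A_l}]$ is a unit in $K_{\mathbb T\times S_{\mathfrak A}}(\mathrm{pt})_{\mathrm{loc}}$.
   Context: $K_{\mathbb T}(\mathrm{pt})_{\mathrm{loc}}$ is the fraction field of $K_{\mathbb T}(\mathrm{pt})\cong\mathbb Z[t_1^{\pm1},\dots,t_d^{\pm1}]$, and for a $K_{\mathbb T}(\mathrm{pt})$-module $M$, $M_{\mathrm{loc}}=M\otimes_{K_{\mathbb T}(\mathrm{pt})}K_{\mathbb T}(\mathrm{pt})_{\mathrm{loc}}$. For a $\mathbb Z/2$-graded object $E$, $[E]=[E_{\mathrm{even}}]-[E_{\mathrm{odd}}]$. Here $D_{A_j}$ is a copy of $D_{|A_j|}=D$ indexed by $A_j$, and $D_{A_1}\otimes\cdots\otimes D_{A_l}$ carries the natural $S_{\mathfrak A}$-equivariant structure in which elements of $S_{\mathfrak A}$ permute the tensor factors according to their action on the blocks of $\mathfrak A$ (via the graded-commutativity isomorphism of the tensor product, with Koszul signs), acting trivially within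 blocks. *)

theory Defs
  imports Complex_Main "HOL-Library.Poly_Mapping" "HOL-Library.Disjoint_Sets"
    "HOL-Library.FuncSet" "HOL-Combinatorics.Permutations"
begin

text \<open>Laurent polynomials in t_1..t_d with complex coefficients: finitely supported
  functions from exponent vectors (nat =>0 int, Poly_Mapping.keys below d) to complex numbers.
  The monomial t^w is Poly_Mapping.single w 1.\<close>

type_synonym laur = "(nat \<Rightarrow>\<^sub>0 int) \<Rightarrow>\<^sub>0 complex"

text \<open>K_T(pt) = Z[t_1^{+-1},...,t_d^{+-1}] inside laur.\<close>
definition K_T :: "nat \<Rightarrow> laur set" where
  "K_T d = {s. (\<forall>e\<in>Poly_Mapping.keys s. Poly_Mapping.keys e \<subseteq> {..<d}) \<and> (\<forall>e. Poly_Mapping.lookup s e \<in> \<int>)}"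

definition Sym_part :: "nat \<Rightarrow> nat set set \<Rightarrow> (nat \<Rightarrow> nat) set" where
  "Sym_part n A = {\<sigma>. \<sigma> permutes {1..n} \<and> (\<forall>B\<in>A. \<sigma> ` B \<in> A)}"

text \<open>A Z/2-graded finite-dimensional (T x G)-representation, given on a finite basis I
  consisting of T-weight vectors: wt i is the T-weight of basis vector i, par i its parity
  (True = odd), and rho g i j the matrix entries of g (coefficient of e_i in g e_j).\<close>
definition graded_rep ::
  "nat \<Rightarrow> (nat \<Rightarrow> nat) set \<Rightarrow> 'i set \<Rightarrow> ((nat \<Rightarrow> nat) \<Rightarrow> 'i \<Rightarrow> 'i \<Rightarrow> complex)
    \<Rightarrow> ('i \<Rightarrow> (nat \<Rightarrow>\<^sub>0 int)) \<Rightarrow> ('i \<Rightarrow> bool) \<Rightarrow> bool" where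
  "graded_rep d G I \<rho> wt par \<longleftrightarrow>
     finite I \<and> (\<forall>i\<in>I. Poly_Mapping.keys (wt i) \<subseteq> {..<d}) \<and>
     (\<forall>i\<in>I. \<forall>j\<in>I. \<rho> id i j = (if i = j then 1 else 0)) \<and>
     (\<forall>g\<in>G. \<forall>h\<in>G. \<forall>i\<in>I. \<forall>j\<in>I. \<rho> (g \<circ> h) i j = (\<Sum>k\<in>I. \<rho> g i k * \<rho> h k j)) \<and>
     (\<forall>g\<in>G. \<forall>i\<in>I. \<forall>j\<in>I. \<rho> g i j \<noteq> 0 \<longrightarrow> wt i = wt j \<and> par i = par j)"

text \<open>The class [E] = [E_even] - [E_odd] in K_{T x G}(pt), represented by its (super)character
  G -> Z[t^{+-1}] (x) C; characters determine classes.\<close>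
definition schar ::
  "'i set \<Rightarrow> ((nat \<Rightarrow> nat) \<Rightarrow> 'i \<Rightarrow> 'i \<Rightarrow> complex) \<Rightarrow> ('i \<Rightarrow> (nat \<Rightarrow>\<^sub>0 int))
     \<Rightarrow> ('i \<Rightarrow> bool) \<Rightarrow> (nat \<Rightarrow> nat) \<Rightarrow> laur" where
  "schar I \<rho> wt par g = (\<Sum>i\<in>I. Poly_Mapping.single (wt i) ((if par i then -1 else 1) * \<rho> g i i))"

text \<open>K_{T x G}(pt) as the ring of virtual (super)characters.\<close>
definition K_equiv :: "nat \<Rightarrow> (nat \<Rightarrow> nat) set \<Rightarrow> ((nat \<Rightarrow> nat) \<Rightarrow> laur) set" where
  "K_equiv d G = {\<chi>. \<exists>(m::nat) \<rho> wt par (m'::nat) \<rho>' wt' par'.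
      graded_rep d G {..<m} \<rho> wt par \<and> graded_rep d G {..<m'} \<rho>' wt' par' \<and>
      \<chi> = (\<lambda>g. schar {..<m} \<rho> wt par g - schar {..<m'} \<rho>' wt' par' g)}"

text \<open>x (an element of K_{T x G}(pt), which is free over K_T(pt)) is a unit in
  K_{T x G}(pt)_loc = K_{T x G}(pt) (x)_{K_T(pt)} Frac(K_T(pt)) iff x * y = s for some
  y in K_{T x G}(pt) and some nonzero s in K_T(pt).\<close>
definition unit_loc :: "nat \<Rightarrow> (nat \<Rightarrow> nat) set \<Rightarrow> ((nat \<Rightarrow> nat) \<Rightarrow> laur) \<Rightarrow> bool" where
  "unit_loc d G x \<longleftrightarrow>
     (\<exists>y\<in>K_equiv d G. \<exists>s\<in>K_T d. s \<noteq> 0 \<and> (\<forall>g\<in>G. x g * y g = s))"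

text \<open>D is given by a weight basis: a list of (T-weight, parity) pairs (True = odd).\<close>
definition classD :: "((nat \<Rightarrow>\<^sub>0 int) \<times> bool) list \<Rightarrow> laur" where
  "classD ds = (\<Sum>(w, p)\<leftarrow>ds. Poly_Mapping.single w (if p then -1 else 1))"

text \<open>The tensor product D_{A_1} (x) ... (x) D_{A_l}: basis vectors are tensor products of
  basis vectors of D, one for each block, i.e. functions f : A -> {..<length ds}.
  The tensor factors are ordered by the minima of the blocks.\<close>
definition tens_basis :: "nat set set \<Rightarrow> ((nat \<Rightarrow>\<^sub>0 int) \<times> bool) list \<Rightarrow> (nat set \<Rightarrow> nat) set" where
  "tens_basis A ds = PiE A (\<lambda>_. {..<length ds})"

definition tens_wt :: "nat set set \<Rightarrow> ((nat \<Rightarrow>\<^sub>0 int) \<times> bool) list \<Rightarrow> (nat set \<Rightarrow> nat) \<Rightarrow> (nat \<Rightarrow>\<^sub>0 int)" where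
  "tens_wt A ds f = (\<Sum>B\<in>A. fst (ds ! f B))"

definition tens_par :: "nat set set \<Rightarrow> ((nat \<Rightarrow>\<^sub>0 int) \<times> bool) list \<Rightarrow> (nat set \<Rightarrow> nat) \<Rightarrow> bool" where
  "tens_par A ds f = odd (card {B\<in>A. snd (ds ! f B)})"

text \<open>Koszul sign of sigma moving the factor in block B to block sigma ` B.\<close>
definition koszul :: "nat set set \<Rightarrow> ((nat \<Rightarrow>\<^sub>0 int) \<times> bool) list \<Rightarrow> (nat \<Rightarrow> nat) \<Rightarrow> (nat set \<Rightarrow> nat) \<Rightarrow> complex" where
  "koszul A ds \<sigma> f = (-1) ^ card {(B, B'). B \<in> A \<and> B' \<in> A \<and> Min B < Min B' \<and>
       Min (\<sigma> ` B') < Min (\<sigma> ` B) \<and> snd (ds ! f B) \<and> snd (ds ! f B')}"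

text \<open>sigma e_f = koszul * e_{f'} where f' (sigma ` B) = f B.\<close>
definition tens_rho :: "nat \<Rightarrow> nat set set \<Rightarrow> ((nat \<Rightarrow>\<^sub>0 int) \<times> bool) list \<Rightarrow>
    (nat \<Rightarrow> nat) \<Rightarrow> (nat set \<Rightarrow> nat) \<Rightarrow> (nat set \<Rightarrow> nat) \<Rightarrow> complex" where
  "tens_rho n A ds \<sigma> g f =
     (if g = (\<lambda>B\<in>A. f (inv_into {1..n} \<sigma> ` B)) then koszul A ds \<sigma> f else 0)"

definition tensor_class :: "nat \<Rightarrow> nat set set \<Rightarrow> ((nat \<Rightarrow>\<^sub>0 int) \<times> bool) list \<Rightarrow> (nat \<Rightarrow> nat) \<Rightarrow> laur" where
  "tensor_class n A ds =
     schar (tens_basis A ds) (tens_rho n A ds) (tens_wt A ds) (tens_par A ds)"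

end

theory Submission
  imports Defs
begin

(* The class x of D_{A_1} (x) ... (x) D_{A_l} is the supercharacter of a graded representation of
  T x S_A, and a virtual character whose values x(sigma) are all nonzero is a unit after
  localisation: x is a root of the product of the X - x(sigma) over sigma in S_A, a polynomial
  over K_T(pt) with nonzero constant term.
  To see x(sigma) <> 0, compute the supertrace of sigma: only basis vectors whose colouring of the
  blocks is constant on the orbits of sigma contribute, so x(sigma) is a product over these
  orbits. An orbit of k blocks contributes the class of D with every weight w replaced by k w,
  possibly with all odd vectors counted as even (they all carry the same sign); either way it is
  nonzero when [D] is. *)

section \<open>Supercharacters\<close>

definition supercharacter :: "nat \<Rightarrow> (nat \<Rightarrow> nat) set \<Rightarrow> ((nat \<Rightarrow> nat) \<Rightarrow> laur) \<Rightarrow> bool" where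
  "supercharacter d G \<chi> \<longleftrightarrow>
     (\<exists>(m::nat) \<rho> wt par. graded_rep d G {..<m} \<rho> wt par \<and> \<chi> = schar {..<m} \<rho> wt par)"

lemma graded_repD:
  assumes "graded_rep d G I \<rho> wt par"
  shows "finite I"
    and "i \<in> I \<Longrightarrow> Poly_Mapping.keys (wt i) \<subseteq> {..<d}"
    and "i \<in> I \<Longrightarrow> j \<in> I \<Longrightarrow> \<rho> id i j = (if i = j then 1 else 0)"
    and "g \<in> G \<Longrightarrow> h \<in> G \<Longrightarrow> i \<in> I \<Longrightarrow> j \<in> I \<Longrightarrow>
      \<rho> (g \<circ> h) i j = (\<Sum>k\<in>I. \<rho> g i k * \<rho> h k j)"
    and "g \<in> G \<Longrightarrow> \<rho> g i j \<noteq> 0 \<Longrightarrow> i \<in> I \<Longrightarrow> j \<in> I \<Longrightarrow> wt i = wt j \<and> par i = par j"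
  using assms by (simp_all add: graded_rep_def)

lemma supercharacterE:
  assumes "supercharacter d G \<chi>"
  obtains m :: nat and \<rho> wt par
  where "graded_rep d G {..<m} \<rho> wt par" "\<chi> = schar {..<m} \<rho> wt par"
  using assms unfolding supercharacter_def by blast

lemma supercharacter_schar:
  assumes rep: "graded_rep d G I \<rho> wt par"
  shows "supercharacter d G (schar I \<rho> wt par)"
proof -
  obtain e where e: "bij_betw e {..<card I} I"
    using ex_bij_betw_nat_finite[OF graded_repD(1)[OF rep]] by (auto simp: lessThan_atLeast0)
  have e_inj: "e i = e j \<longleftrightarrow> i = j" if "i < card I" "j < card I" for i j
    using e that by (auto simp: bij_betw_def inj_on_def)
  have e_mem: "e i \<in> I" if "i < card I" for i
    using e that bij_betwE by blast
  have reindex: "(\<Sum>k<card I. h (e k)) = (\<Sum>k\<in>I. h k)" for h :: "_ \<Rightarrow> 'b::comm_monoid_add"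
    using sum.reindex_bij_betw[OF e] by blast
  define \<rho>' where "\<rho>' = (\<lambda>g i j. \<rho> g (e i) (e j))"
  have "graded_rep d G {..<card I} \<rho>' (wt \<circ> e) (par \<circ> e)"
    unfolding graded_rep_def
  proof (intro conjI ballI)
    fix g h i j assume "g \<in> G" "h \<in> G" "i \<in> {..<card I}" "j \<in> {..<card I}"
    then have "\<rho>' (g \<circ> h) i j = (\<Sum>k\<in>I. \<rho> g (e i) k * \<rho> h k (e j))"
      using rep e_mem by (auto simp: graded_rep_def \<rho>'_def)
    also have "\<dots> = (\<Sum>k<card I. \<rho>' g i k * \<rho>' h k j)"
      by (simp add: reindex[symmetric] \<rho>'_def)
    finally show "\<rho>' (g \<circ> h) i j = (\<Sum>k\<in>{..<card I}. \<rho>' g i k * \<rho>' h k j)" by simp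
  qed (use rep e_mem e_inj in \<open>auto simp: graded_rep_def \<rho>'_def\<close>)
  moreover have "schar {..<card I} \<rho>' (wt \<circ> e) (par \<circ> e) = schar I \<rho> wt par"
    by (auto simp: schar_def \<rho>'_def reindex[symmetric])
  ultimately show ?thesis unfolding supercharacter_def by metis
qed

definition rep_Times ::
    "('g \<Rightarrow> 'i \<Rightarrow> 'i \<Rightarrow> complex) \<Rightarrow> ('g \<Rightarrow> 'j \<Rightarrow> 'j \<Rightarrow> complex) \<Rightarrow> 'g \<Rightarrow> 'i \<times> 'j \<Rightarrow> 'i \<times> 'j \<Rightarrow> complex" where
  "rep_Times \<rho>1 \<rho>2 g p q = \<rho>1 g (fst p) (fst q) * \<rho>2 g (snd p) (snd q)"

definition rep_Plus ::
    "('g \<Rightarrow> 'i \<Rightarrow> 'i \<Rightarrow> complex) \<Rightarrow> ('g \<Rightarrow> 'j \<Rightarrow> 'j \<Rightarrow> complex) \<Rightarrow> 'g \<Rightarrow> 'i + 'j \<Rightarrow> 'i + 'j \<Rightarrow> complex" where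
  "rep_Plus \<rho>1 \<rho>2 g = (\<lambda>Inl i \<Rightarrow> (\<lambda>Inl j \<Rightarrow> \<rho>1 g i j | Inr j \<Rightarrow> 0) | Inr i \<Rightarrow> (\<lambda>Inl j \<Rightarrow> 0 | Inr j \<Rightarrow> \<rho>2 g i j))"

lemma graded_rep_Times:
  assumes R1: "graded_rep d G I1 \<rho>1 wt1 par1" and R2: "graded_rep d G I2 \<rho>2 wt2 par2"
  shows "graded_rep d G (I1 \<times> I2) (rep_Times \<rho>1 \<rho>2)
    (\<lambda>p. wt1 (fst p) + wt2 (snd p)) (\<lambda>p. par1 (fst p) \<noteq> par2 (snd p))"
  unfolding graded_rep_def
proof (intro conjI ballI)
  show "finite (I1 \<times> I2)" using graded_repD(1)[OF R1] graded_repD(1)[OF R2] by simp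
next
  fix i assume "i \<in> I1 \<times> I2"
  then have "Poly_Mapping.keys (wt1 (fst i)) \<subseteq> {..<d}" "Poly_Mapping.keys (wt2 (snd i)) \<subseteq> {..<d}"
    using graded_repD(2)[OF R1] graded_repD(2)[OF R2] by (auto simp: mem_Times_iff)
  then show "Poly_Mapping.keys (wt1 (fst i) + wt2 (snd i)) \<subseteq> {..<d}"
    using keys_add[of "wt1 (fst i)" "wt2 (snd i)"] by blast
next
  fix i j assume "i \<in> I1 \<times> I2" "j \<in> I1 \<times> I2"
  then show "rep_Times \<rho>1 \<rho>2 id i j = (if i = j then 1 else 0)"
    by (auto simp: rep_Times_def prod_eq_iff graded_repD(3)[OF R1] graded_repD(3)[OF R2])
next
  fix g h i j assume "g \<in> G" "h \<in> G" "i \<in> I1 \<times> I2" "j \<in> I1 \<times> I2"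
  then have "rep_Times \<rho>1 \<rho>2 (g \<circ> h) i j
      = (\<Sum>k\<in>I1. \<rho>1 g (fst i) k * \<rho>1 h k (fst j)) * (\<Sum>k\<in>I2. \<rho>2 g (snd i) k * \<rho>2 h k (snd j))"
    by (auto simp: rep_Times_def graded_repD(4)[OF R1] graded_repD(4)[OF R2])
  also have "\<dots> = (\<Sum>k\<in>I1 \<times> I2. rep_Times \<rho>1 \<rho>2 g i k * rep_Times \<rho>1 \<rho>2 h k j)"
    unfolding sum_product sum.cartesian_product by (rule sum.cong) (auto simp: rep_Times_def algebra_simps)
  finally show "rep_Times \<rho>1 \<rho>2 (g \<circ> h) i j
      = (\<Sum>k\<in>I1 \<times> I2. rep_Times \<rho>1 \<rho>2 g i k * rep_Times \<rho>1 \<rho>2 h k j)" .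
next
  fix g i j assume "g \<in> G" "i \<in> I1 \<times> I2" "j \<in> I1 \<times> I2"
  then show "rep_Times \<rho>1 \<rho>2 g i j \<noteq> 0 \<longrightarrow> wt1 (fst i) + wt2 (snd i) = wt1 (fst j) + wt2 (snd j)
      \<and> (par1 (fst i) \<noteq> par2 (snd i)) = (par1 (fst j) \<noteq> par2 (snd j))"
    by (auto simp: rep_Times_def mem_Times_iff
        dest!: graded_repD(5)[OF R1 \<open>g \<in> G\<close>] graded_repD(5)[OF R2 \<open>g \<in> G\<close>])
qed

lemma schar_Times:
  "schar (I1 \<times> I2) (rep_Times \<rho>1 \<rho>2) (\<lambda>p. wt1 (fst p) + wt2 (snd p)) (\<lambda>p. par1 (fst p) \<noteq> par2 (snd p))
    = (\<lambda>g. schar I1 \<rho>1 wt1 par1 g * schar I2 \<rho>2 wt2 par2 g)"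
  unfolding schar_def sum_product sum.cartesian_product
  by (intro ext sum.cong) (auto simp: mult_single rep_Times_def)

lemma graded_rep_Plus:
  assumes R1: "graded_rep d G I1 \<rho>1 wt1 par1" and R2: "graded_rep d G I2 \<rho>2 wt2 par2"
  shows "graded_rep d G (I1 <+> I2) (rep_Plus \<rho>1 \<rho>2) (case_sum wt1 wt2) (case_sum par1 par2)"
  unfolding graded_rep_def
proof (intro conjI ballI)
  show "finite (I1 <+> I2)" using graded_repD(1)[OF R1] graded_repD(1)[OF R2] by simp
next
  fix i assume "i \<in> I1 <+> I2"
  then show "Poly_Mapping.keys (case_sum wt1 wt2 i) \<subseteq> {..<d}"
    by (elim PlusE) (simp_all add: graded_repD(2)[OF R1] graded_repD(2)[OF R2])
next
  fix i j assume "i \<in> I1 <+> I2" "j \<in> I1 <+> I2"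
  then show "rep_Plus \<rho>1 \<rho>2 id i j = (if i = j then 1 else 0)"
    by (auto simp: rep_Plus_def graded_repD(3)[OF R1] graded_repD(3)[OF R2] split: if_splits)
next
  fix g h i j assume "g \<in> G" "h \<in> G" "i \<in> I1 <+> I2" "j \<in> I1 <+> I2"
  then show "rep_Plus \<rho>1 \<rho>2 (g \<circ> h) i j = (\<Sum>k\<in>I1 <+> I2. rep_Plus \<rho>1 \<rho>2 g i k * rep_Plus \<rho>1 \<rho>2 h k j)"
    using graded_repD(1)[OF R1] graded_repD(1)[OF R2]
    by (auto simp: sum.Plus rep_Plus_def graded_repD(4)[OF R1] graded_repD(4)[OF R2])
next
  fix g i j assume "g \<in> G" "i \<in> I1 <+> I2" "j \<in> I1 <+> I2"
  then show "rep_Plus \<rho>1 \<rho>2 g i j \<noteq> 0 \<longrightarrow>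
      case_sum wt1 wt2 i = case_sum wt1 wt2 j \<and> case_sum par1 par2 i = case_sum par1 par2 j"
    by (auto simp: rep_Plus_def dest!: graded_repD(5)[OF R1 \<open>g \<in> G\<close>] graded_repD(5)[OF R2 \<open>g \<in> G\<close>])
qed

lemma schar_Plus:
  assumes "finite I1" "finite I2"
  shows "schar (I1 <+> I2) (rep_Plus \<rho>1 \<rho>2) (case_sum wt1 wt2) (case_sum par1 par2)
    = (\<lambda>g. schar I1 \<rho>1 wt1 par1 g + schar I2 \<rho>2 wt2 par2 g)"
  using assms by (simp add: schar_def sum.Plus rep_Plus_def fun_eq_iff)

lemma supercharacter_mult:
  assumes "supercharacter d G \<chi>1" "supercharacter d G \<chi>2"
  shows "supercharacter d G (\<lambda>g. \<chi>1 g * \<chi>2 g)"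
proof -
  obtain m1 :: nat and \<rho>1 wt1 par1 where R1: "graded_rep d G {..<m1} \<rho>1 wt1 par1"
    and "\<chi>1 = schar {..<m1} \<rho>1 wt1 par1" using assms(1) by (rule supercharacterE)
  moreover obtain m2 :: nat and \<rho>2 wt2 par2 where R2: "graded_rep d G {..<m2} \<rho>2 wt2 par2"
    and "\<chi>2 = schar {..<m2} \<rho>2 wt2 par2" using assms(2) by (rule supercharacterE)
  ultimately show ?thesis
    using supercharacter_schar[OF graded_rep_Times[OF R1 R2]] by (simp only: schar_Times)
qed

lemma supercharacter_add:
  assumes "supercharacter d G \<chi>1" "supercharacter d G \<chi>2"
  shows "supercharacter d G (\<lambda>g. \<chi>1 g + \<chi>2 g)"
proof -
  obtain m1 :: nat and \<rho>1 wt1 par1 where R1: "graded_rep d G {..<m1} \<rho>1 wt1 par1"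
    and "\<chi>1 = schar {..<m1} \<rho>1 wt1 par1" using assms(1) by (rule supercharacterE)
  moreover obtain m2 :: nat and \<rho>2 wt2 par2 where R2: "graded_rep d G {..<m2} \<rho>2 wt2 par2"
    and "\<chi>2 = schar {..<m2} \<rho>2 wt2 par2" using assms(2) by (rule supercharacterE)
  ultimately show ?thesis
    using supercharacter_schar[OF graded_rep_Plus[OF R1 R2]] by (simp only: schar_Plus finite_lessThan)
qed

lemma supercharacter_uminus:
  assumes "supercharacter d G \<chi>"
  shows "supercharacter d G (\<lambda>g. - \<chi> g)"
proof -
  obtain m :: nat and \<rho> wt par where R: "graded_rep d G {..<m} \<rho> wt par"
    and c: "\<chi> = schar {..<m} \<rho> wt par" using assms by (rule supercharacterE)
  have "graded_rep d G {..<m} \<rho> wt (Not \<circ> par)"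
    using R by (simp add: graded_rep_def)
  moreover have "(\<lambda>g. - \<chi> g) = schar {..<m} \<rho> wt (Not \<circ> par)"
    unfolding c schar_def sum_negf[symmetric]
    by (intro ext sum.cong) (auto simp: single_uminus)
  ultimately show ?thesis using supercharacter_schar by metis
qed

lemma supercharacter_diff:
  assumes "supercharacter d G \<chi>1" "supercharacter d G \<chi>2"
  shows "supercharacter d G (\<lambda>g. \<chi>1 g - \<chi>2 g)"
  using supercharacter_add[OF assms(1) supercharacter_uminus[OF assms(2)]] by simp

lemma supercharacter_zero: "supercharacter d G (\<lambda>_. 0)"
proof -
  have "graded_rep d G {..<0::nat} (\<lambda>_ _ _. 0) (\<lambda>_. 0) (\<lambda>_. False)"
    by (simp add: graded_rep_def)
  moreover have "(\<lambda>_. 0) = schar {..<0::nat} (\<lambda>_ _ _. 0) (\<lambda>_. 0) (\<lambda>_. False)"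
    by (simp add: schar_def fun_eq_iff)
  ultimately show ?thesis unfolding supercharacter_def by blast
qed

lemma supercharacter_monomial:
  assumes "Poly_Mapping.keys e \<subseteq> {..<d}"
  shows "supercharacter d G (\<lambda>_. Poly_Mapping.single e 1)"
proof -
  have "graded_rep d G {..<1::nat} (\<lambda>_ _ _. 1) (\<lambda>_. e) (\<lambda>_. False)"
    using assms by (simp add: graded_rep_def)
  moreover have "(\<lambda>_. Poly_Mapping.single e 1) = schar {..<1::nat} (\<lambda>_ _ _. 1) (\<lambda>_. e) (\<lambda>_. False)"
    by (simp add: schar_def fun_eq_iff)
  ultimately show ?thesis unfolding supercharacter_def by blast
qed

lemma supercharacter_sum:
  assumes "finite S" "\<And>s. s \<in> S \<Longrightarrow> supercharacter d G (\<chi> s)"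
  shows "supercharacter d G (\<lambda>g. \<Sum>s\<in>S. \<chi> s g)"
  using assms
proof (induction S rule: finite_induct)
  case (insert s S)
  then show ?case using supercharacter_add[of d G "\<chi> s" "\<lambda>g. \<Sum>s\<in>S. \<chi> s g"] by simp
qed (simp add: supercharacter_zero)

lemma supercharacter_of_int_mult:
  assumes "supercharacter d G \<chi>"
  shows "supercharacter d G (\<lambda>g. of_int k * \<chi> g)"
proof -
  have nat: "supercharacter d G (\<lambda>g. of_nat m * \<chi> g)" for m
  proof (induction m)
    case (Suc m)
    then show ?case using supercharacter_add[OF assms Suc.IH] by (simp add: distrib_right)
  qed (simp add: supercharacter_zero)
  show ?thesis
  proof (cases k rule: int_cases2)
    case (nonpos m)
    then show ?thesis using supercharacter_uminus[OF nat[of m]] by simp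
  qed (use nat in simp)
qed

lemma sum_single_lookup: "(\<Sum>e\<in>Poly_Mapping.keys c. Poly_Mapping.single e (Poly_Mapping.lookup c e)) = c"
proof (rule poly_mapping_eqI)
  fix k
  show "Poly_Mapping.lookup (\<Sum>e\<in>Poly_Mapping.keys c. Poly_Mapping.single e (Poly_Mapping.lookup c e)) k
      = Poly_Mapping.lookup c k"
    by (cases "k \<in> Poly_Mapping.keys c") (simp_all add: lookup_sum lookup_single when_def in_keys_iff)
qed

lemma supercharacter_const:
  assumes c: "c \<in> K_T d"
  shows "supercharacter d G (\<lambda>_. c)"
proof -
  have "\<exists>k. Poly_Mapping.lookup c e = of_int k" for e
    using c unfolding K_T_def by (blast elim: Ints_cases)
  then obtain k where k: "\<And>e. Poly_Mapping.lookup c e = of_int (k e)" by metis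
  have "supercharacter d G (\<lambda>_. \<Sum>e\<in>Poly_Mapping.keys c. of_int (k e) * Poly_Mapping.single e 1)"
    using c by (intro supercharacter_sum supercharacter_of_int_mult supercharacter_monomial)
      (auto simp: K_T_def)
  moreover have "of_int (k e) * Poly_Mapping.single e 1 = Poly_Mapping.single e (Poly_Mapping.lookup c e)" for e
    using mult_single[of 0 "of_int (k e)" e 1] by (simp add: k)
  then have "(\<Sum>e\<in>Poly_Mapping.keys c. of_int (k e) * Poly_Mapping.single e 1) = c"
    by (simp add: sum_single_lookup)
  ultimately show ?thesis by simp
qed

lemma supercharacter_prod_const:
  assumes "set cs \<subseteq> K_T d"
  shows "supercharacter d G (\<lambda>_. \<Prod>c\<leftarrow>cs. - c)"
  using assms
proof (induction cs)
  case Nil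
  then show ?case using supercharacter_monomial[of 0 d G] by simp
next
  case (Cons c cs)
  then show ?case
    using supercharacter_mult[OF supercharacter_uminus[OF supercharacter_const] Cons.IH] by simp
qed

lemma sum_single_in_K_T:
  assumes "finite I" "\<And>i. i \<in> I \<Longrightarrow> Poly_Mapping.keys (w i) \<subseteq> {..<d}" "\<And>i. i \<in> I \<Longrightarrow> a i \<in> \<int>"
  shows "(\<Sum>i\<in>I. Poly_Mapping.single (w i) (a i)) \<in> K_T d"
proof -
  have "Poly_Mapping.keys e \<subseteq> {..<d}" if "e \<in> Poly_Mapping.keys (\<Sum>i\<in>I. Poly_Mapping.single (w i) (a i))" for e
    using that keys_sum[of "\<lambda>i. Poly_Mapping.single (w i) (a i)" I] assms(2)
    by (auto split: if_splits)
  moreover have "Poly_Mapping.lookup (\<Sum>i\<in>I. Poly_Mapping.single (w i) (a i)) e \<in> \<int>" for e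
    unfolding lookup_sum lookup_single using assms(3) by (intro Ints_sum) (simp add: when_def)
  ultimately show ?thesis by (simp add: K_T_def)
qed

lemma schar_in_K_T:
  assumes "graded_rep d G I \<rho> wt par" "\<And>i. i \<in> I \<Longrightarrow> \<rho> g i i \<in> \<int>"
  shows "schar I \<rho> wt par g \<in> K_T d"
  unfolding schar_def using assms by (intro sum_single_in_K_T) (auto simp: graded_rep_def)

lemma supercharacter_id_in_K_T:
  assumes "supercharacter d G \<chi>"
  shows "\<chi> id \<in> K_T d"
proof -
  obtain m :: nat and \<rho> wt par where R: "graded_rep d G {..<m} \<rho> wt par"
    and c: "\<chi> = schar {..<m} \<rho> wt par" using assms by (rule supercharacterE)
  show ?thesis
    unfolding c by (rule schar_in_K_T[OF R]) (use R in \<open>simp add: graded_rep_def\<close>)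
qed

lemma supercharacter_in_K_equiv:
  assumes "supercharacter d G \<chi>"
  shows "\<chi> \<in> K_equiv d G"
proof -
  obtain m :: nat and \<rho> wt par where R: "graded_rep d G {..<m} \<rho> wt par"
    and c: "\<chi> = schar {..<m} \<rho> wt par" using assms by (rule supercharacterE)
  have "graded_rep d G {..<0::nat} \<rho> wt par" by (simp add: graded_rep_def)
  moreover have "\<chi> = (\<lambda>g. schar {..<m} \<rho> wt par g - schar {..<0::nat} \<rho> wt par g)"
    by (rule ext) (simp add: c schar_def)
  ultimately show ?thesis using R unfolding K_equiv_def by blast
qed

lemma supercharacter_cofactor:
  assumes x: "supercharacter d G x" and cs: "set cs \<subseteq> K_T d"
  shows "\<exists>q. supercharacter d G q \<and> (\<forall>g. x g * q g = (\<Prod>c\<leftarrow>cs. x g - c) - (\<Prod>c\<leftarrow>cs. - c))"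
  using cs
proof (induction cs)
  case Nil
  show ?case using supercharacter_zero by fastforce
next
  case (Cons c cs)
  then obtain q where q: "supercharacter d G q"
    and xq: "\<And>g. x g * q g = (\<Prod>c\<leftarrow>cs. x g - c) - (\<Prod>c\<leftarrow>cs. - c)"
    by auto
  let ?q = "\<lambda>g. (x g - c) * q g + (\<Prod>c\<leftarrow>cs. - c)"
  have "supercharacter d G ?q"
    using Cons.prems by (intro supercharacter_add supercharacter_mult supercharacter_diff
        supercharacter_const supercharacter_prod_const x q) auto
  moreover have "x g * ?q g = (\<Prod>c\<leftarrow>c # cs. x g - c) - (\<Prod>c\<leftarrow>c # cs. - c)" for g
  proof -
    have "x g * ?q g = (x g - c) * (x g * q g) + x g * (\<Prod>c\<leftarrow>cs. - c)"
      by (simp add: algebra_simps)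
    also have "\<dots> = (\<Prod>c\<leftarrow>c # cs. x g - c) - (\<Prod>c\<leftarrow>c # cs. - c)"
      unfolding xq by (simp add: algebra_simps)
    finally show ?thesis .
  qed
  ultimately show ?case by blast
qed

text \<open>x is a root of the product of the X - x h over h \<in> G, a polynomial with coefficients in
  K_T(pt) whose constant term s is nonzero; splitting off the factor X gives x q = s.\<close>
lemma unit_loc_if_nonzero_values:
  assumes x: "supercharacter d G x" and "finite G" "id \<in> G"
    and in_K_T: "\<And>g. g \<in> G \<Longrightarrow> x g \<in> K_T d" and nonzero: "\<And>g. g \<in> G \<Longrightarrow> x g \<noteq> 0"
  shows "unit_loc d G x"
proof -
  obtain hs where hs: "set hs = G" using finite_list \<open>finite G\<close> by blast
  define cs where "cs = map x hs"
  have "set cs \<subseteq> K_T d" using in_K_T hs by (auto simp: cs_def)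
  then obtain q where q: "supercharacter d G q"
    and xq: "\<And>g. x g * q g = (\<Prod>c\<leftarrow>cs. x g - c) - (\<Prod>c\<leftarrow>cs. - c)"
    using supercharacter_cofactor[OF x] by blast
  define s where "s = - (\<Prod>c\<leftarrow>cs. - c)"
  have xq_s: "x g * q g = s" if "g \<in> G" for g
  proof -
    have "x g \<in> set cs" using that hs by (simp add: cs_def)
    then have "(\<Prod>c\<leftarrow>cs. x g - c) = 0" by (auto simp: prod_list_zero_iff)
    then show ?thesis by (simp add: xq s_def)
  qed
  have "s \<noteq> 0" using nonzero hs by (auto simp: s_def cs_def prod_list_zero_iff)
  moreover have "s \<in> K_T d"
    using supercharacter_id_in_K_T[OF supercharacter_mult[OF x q]] xq_s[OF \<open>id \<in> G\<close>] by simp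
  ultimately show ?thesis
    unfolding unit_loc_def using supercharacter_in_K_equiv[OF q] xq_s by blast
qed

section \<open>Counting inversions\<close>

definition inversions :: "('a \<Rightarrow> nat) \<Rightarrow> ('a \<Rightarrow> nat) \<Rightarrow> 'a set \<Rightarrow> ('a \<times> 'a) set" where
  "inversions k k' U = {(u, v). u \<in> U \<and> v \<in> U \<and> k u < k v \<and> k' v < k' u}"

lemma inversions_subset: "inversions k k' U \<subseteq> U \<times> U"
  by (auto simp: inversions_def)

lemma card_inversions_image:
  assumes "inj_on h U"
  shows "card (inversions k k' (h ` U)) = card (inversions (k \<circ> h) (k' \<circ> h) U)"
proof -
  have "inversions k k' (h ` U) = map_prod h h ` inversions (k \<circ> h) (k' \<circ> h) U"
    by (auto simp: inversions_def image_iff)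
  moreover have "inj_on (map_prod h h) (inversions (k \<circ> h) (k' \<circ> h) U)"
    using assms by (auto simp: inj_on_def inversions_def)
  ultimately show ?thesis by (simp add: card_image)
qed

lemma card_sym_diff_Int:
  assumes "finite S" "finite T"
  shows "card (sym_diff S T) + 2 * card (S \<inter> T) = card S + card T"
proof -
  have "card (sym_diff S T) = card (S - T) + card (T - S)"
    using assms by (intro card_Un_disjoint) auto
  moreover have "card S = card (S - T) + card (S \<inter> T)" "card T = card (T - S) + card (S \<inter> T)"
    using assms card_Int_Diff[of S T] card_Int_Diff[of T S] by (simp_all add: Int_commute)
  ultimately show ?thesis by simp
qed

lemma card_sym_eq_double_card_increasing:
  fixes k :: "'a \<Rightarrow> nat"
  assumes "finite U" and k: "inj_on k U" and X: "X \<subseteq> {(u, v). u \<in> U \<and> v \<in> U \<and> u \<noteq> v}"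
    and sym: "\<And>u v. (u, v) \<in> X \<Longrightarrow> (v, u) \<in> X"
  shows "card X = 2 * card {p\<in>X. k (fst p) < k (snd p)}"
proof -
  define X1 where "X1 = {p\<in>X. k (fst p) < k (snd p)}"
  have "finite X" using X finite_subset[of X "U \<times> U"] \<open>finite U\<close> by auto
  have "k u \<noteq> k v" if "(u, v) \<in> X" for u v
    using that X k by (auto dest: inj_onD)
  then have "X = X1 \<union> prod.swap ` X1"
    using sym by (force simp: X1_def image_iff)
  moreover have "X1 \<inter> prod.swap ` X1 = {}" by (auto simp: X1_def)
  moreover have "card (prod.swap ` X1) = card X1" by (simp add: card_image)
  ultimately show ?thesis
    using \<open>finite X\<close> card_Un_disjoint[of X1 "prod.swap ` X1"] by (simp add: X1_def)
qed

text \<open>The sign of a permutation is multiplicative; here a permutation of U is the change from one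
  ordering of U to another.\<close>
lemma sign_inversions_trans:
  fixes k0 k1 k2 :: "'a \<Rightarrow> nat"
  assumes "finite U" and k0: "inj_on k0 U" and k1: "inj_on k1 U" and k2: "inj_on k2 U"
  shows "(-1::'b::ring_1) ^ card (inversions k0 k2 U)
    = (-1) ^ card (inversions k0 k1 U) * (-1) ^ card (inversions k1 k2 U)"
proof -
  define D where "D = {(u, v). u \<in> U \<and> v \<in> U \<and> u \<noteq> v \<and> (k1 v < k1 u) \<noteq> (k2 v < k2 u)}"
  define C where "C = {p\<in>D. k0 (fst p) < k0 (snd p)}"
  have fin: "finite (inversions k0 k1 U)" "finite C"
    by (rule finite_subset[OF inversions_subset], simp add: \<open>finite U\<close>,
        rule finite_subset[of _ "U \<times> U"], auto simp: C_def D_def \<open>finite U\<close>)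
  have D_sym: "(v, u) \<in> D" if "(u, v) \<in> D" for u v
  proof -
    have "k1 u \<noteq> k1 v" "k2 u \<noteq> k2 v" using that k1 k2 by (auto simp: D_def dest: inj_onD)
    then show ?thesis using that by (auto simp: D_def)
  qed
  have D_sub: "D \<subseteq> {(u, v). u \<in> U \<and> v \<in> U \<and> u \<noteq> v}" by (auto simp: D_def)
  have "{p\<in>D. k1 (fst p) < k1 (snd p)} = inversions k1 k2 U" by (auto simp: D_def inversions_def)
  then have "card C = card (inversions k1 k2 U)"
    using card_sym_eq_double_card_increasing[OF \<open>finite U\<close> k0 D_sub D_sym]
      card_sym_eq_double_card_increasing[OF \<open>finite U\<close> k1 D_sub D_sym]
    by (simp add: C_def)
  moreover have "inversions k0 k2 U = sym_diff (inversions k0 k1 U) C"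
    by (auto simp: inversions_def C_def D_def)
  ultimately have "card (inversions k0 k2 U) + 2 * card (inversions k0 k1 U \<inter> C)
      = card (inversions k0 k1 U) + card (inversions k1 k2 U)"
    using card_sym_diff_Int[OF fin] by simp
  then have "(-1::'b) ^ (card (inversions k0 k2 U) + 2 * card (inversions k0 k1 U \<inter> C))
      = (-1) ^ (card (inversions k0 k1 U) + card (inversions k1 k2 U))"
    by simp
  then show ?thesis by (simp add: power_add power_mult)
qed

lemma card_filter_bij_betw:
  assumes "bij_betw h S S"
  shows "card {x\<in>S. P (h x)} = card {x\<in>S. P x}"
proof -
  have "h ` {x\<in>S. P (h x)} = {x\<in>S. P x}"
    using assms by (auto simp: bij_betw_def)
  moreover have "inj_on h {x\<in>S. P (h x)}"
    using assms by (auto simp: bij_betw_def inj_on_def)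
  ultimately show ?thesis by (metis card_image)
qed

text \<open>If p permutes each of two disjoint sets, the pairs straddling them whose order under k is
  reversed by p come in equinumerous classes (those whose order p creates and those it destroys),
  so there is an even number of them.\<close>
lemma even_card_cross_inversions:
  fixes k :: "'a \<Rightarrow> nat"
  assumes "finite Y1" "finite Y2" and disj: "Y1 \<inter> Y2 = {}"
    and p1: "bij_betw p Y1 Y1" and p2: "bij_betw p Y2 Y2" and k: "inj_on k (Y1 \<union> Y2)"
  shows "even (card {(u, v). (u \<in> Y1 \<and> v \<in> Y2 \<or> u \<in> Y2 \<and> v \<in> Y1) \<and> k u < k v \<and> k (p v) < k (p u)})"
proof -
  define \<alpha> where "\<alpha> = {q \<in> Y1 \<times> Y2. k (fst q) < k (snd q)}"
  define \<beta> where "\<beta> = {q \<in> Y1 \<times> Y2. k (p (fst q)) < k (p (snd q))}"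
  have fin: "finite \<alpha>" "finite \<beta>" using assms(1,2) by (auto simp: \<alpha>_def \<beta>_def)
  have p_mem: "p a \<in> Y1" "p b \<in> Y2" if "a \<in> Y1" "b \<in> Y2" for a b
    using that p1 p2 bij_betwE by blast+
  have k_ne: "k a \<noteq> k b" if "a \<in> Y1" "b \<in> Y2" for a b
    using that disj k by (metis IntI UnCI empty_iff inj_onD)
  have flip: "k a < k b \<longleftrightarrow> \<not> k b < k a" "k (p a) < k (p b) \<longleftrightarrow> \<not> k (p b) < k (p a)"
    if "a \<in> Y1" "b \<in> Y2" for a b
    using k_ne[OF that] k_ne[OF p_mem[OF that]] by linarith+
  have "\<alpha> - \<beta> = {(u, v). u \<in> Y1 \<and> v \<in> Y2 \<and> k u < k v \<and> k (p v) < k (p u)}"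
    by (auto simp: \<alpha>_def \<beta>_def flip)
  moreover have "\<beta> - \<alpha> = prod.swap ` {(u, v). u \<in> Y2 \<and> v \<in> Y1 \<and> k u < k v \<and> k (p v) < k (p u)}"
    by (auto simp: \<alpha>_def \<beta>_def flip image_iff)
  ultimately have cross: "{(u, v). (u \<in> Y1 \<and> v \<in> Y2 \<or> u \<in> Y2 \<and> v \<in> Y1) \<and> k u < k v \<and> k (p v) < k (p u)}
      = (\<alpha> - \<beta>) \<union> prod.swap ` (\<beta> - \<alpha>)"
    by (auto simp: image_iff)
  have "card \<alpha> = card \<beta>"
    using card_filter_bij_betw[OF bij_betw_map_prod[OF p1 p2], of "\<lambda>q. k (fst q) < k (snd q)"]
    by (simp add: \<alpha>_def \<beta>_def)
  have "card ((\<alpha> - \<beta>) \<union> prod.swap ` (\<beta> - \<alpha>)) = card (\<alpha> - \<beta>) + card (\<beta> - \<alpha>)"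
    using fin disj by (subst card_Un_disjoint) (auto simp: \<alpha>_def \<beta>_def card_image)
  also have "\<dots> = 2 * (card \<alpha> - card (\<alpha> \<inter> \<beta>))"
    using fin \<open>card \<alpha> = card \<beta>\<close> by (simp add: card_Diff_subset_Int Int_commute)
  finally show ?thesis unfolding cross by simp
qed

lemma sign_inversions_Un:
  fixes k :: "'a \<Rightarrow> nat"
  assumes fin: "finite Y1" "finite Y2" and disj: "Y1 \<inter> Y2 = {}"
    and "bij_betw p Y1 Y1" "bij_betw p Y2 Y2" "inj_on k (Y1 \<union> Y2)"
  shows "(-1::'b::ring_1) ^ card (inversions k (\<lambda>u. k (p u)) (Y1 \<union> Y2))
    = (-1) ^ card (inversions k (\<lambda>u. k (p u)) Y1) * (-1) ^ card (inversions k (\<lambda>u. k (p u)) Y2)"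
proof -
  define cross where
    "cross = {(u, v). (u \<in> Y1 \<and> v \<in> Y2 \<or> u \<in> Y2 \<and> v \<in> Y1) \<and> k u < k v \<and> k (p v) < k (p u)}"
  have fin_inv: "finite (inversions k (\<lambda>u. k (p u)) Y)" if "finite Y" for Y :: "'a set"
    using that by (intro finite_subset[OF inversions_subset] finite_cartesian_product)
  have "finite cross"
    by (rule finite_subset[of _ "(Y1 \<union> Y2) \<times> (Y1 \<union> Y2)"]) (auto simp: cross_def fin)
  moreover have "inversions k (\<lambda>u. k (p u)) (Y1 \<union> Y2)
      = (inversions k (\<lambda>u. k (p u)) Y1 \<union> inversions k (\<lambda>u. k (p u)) Y2) \<union> cross"
    by (auto simp: inversions_def cross_def)
  moreover have "inversions k (\<lambda>u. k (p u)) Y1 \<inter> inversions k (\<lambda>u. k (p u)) Y2 = {}"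
    "(inversions k (\<lambda>u. k (p u)) Y1 \<union> inversions k (\<lambda>u. k (p u)) Y2) \<inter> cross = {}"
    using disj by (auto simp: inversions_def cross_def)
  ultimately have "card (inversions k (\<lambda>u. k (p u)) (Y1 \<union> Y2))
      = card (inversions k (\<lambda>u. k (p u)) Y1) + card (inversions k (\<lambda>u. k (p u)) Y2) + card cross"
    using fin_inv[OF fin(1)] fin_inv[OF fin(2)] by (simp add: card_Un_disjoint)
  moreover obtain m where "card cross = 2 * m"
    using even_card_cross_inversions[OF assms] unfolding cross_def by blast
  ultimately show ?thesis by (simp add: power_add power_mult)
qed

section \<open>The tensor product representation\<close>

lemma Sym_part_id: "id \<in> Sym_part n A"
  by (simp add: Sym_part_def permutes_id)

lemma Sym_part_comp:
  assumes "\<sigma> \<in> Sym_part n A" "\<tau> \<in> Sym_part n A"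
  shows "\<sigma> \<circ> \<tau> \<in> Sym_part n A"
proof -
  have "(\<sigma> \<circ> \<tau>) ` B \<in> A" if "B \<in> A" for B
    using assms that unfolding Sym_part_def image_comp[symmetric] by blast
  then show ?thesis using assms permutes_compose unfolding Sym_part_def by blast
qed

lemma finite_Sym_part: "finite (Sym_part n A)"
  by (rule finite_subset[OF _ finite_permutations[of "{1..n}"]]) (auto simp: Sym_part_def)

lemma Sym_part_image_block: "\<sigma> \<in> Sym_part n A \<Longrightarrow> B \<in> A \<Longrightarrow> \<sigma> ` B \<in> A"
  by (simp add: Sym_part_def)

definition tens_act :: "nat \<Rightarrow> nat set set \<Rightarrow> (nat \<Rightarrow> nat) \<Rightarrow> (nat set \<Rightarrow> nat) \<Rightarrow> nat set \<Rightarrow> nat" where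
  "tens_act n A \<sigma> f = (\<lambda>B\<in>A. f (inv_into {1..n} \<sigma> ` B))"

definition odd_blocks :: "nat set set \<Rightarrow> ((nat \<Rightarrow>\<^sub>0 int) \<times> bool) list \<Rightarrow> (nat set \<Rightarrow> nat) \<Rightarrow> nat set set" where
  "odd_blocks A ds f = {B\<in>A. snd (ds ! f B)}"

lemma tens_rho_eq: "tens_rho n A ds \<sigma> g f = (if g = tens_act n A \<sigma> f then koszul A ds \<sigma> f else 0)"
  by (simp add: tens_rho_def tens_act_def)

lemma tens_par_eq: "tens_par A ds f = odd (card (odd_blocks A ds f))"
  by (simp add: tens_par_def odd_blocks_def)

lemma koszul_eq_inversions:
  "koszul A ds \<sigma> f = (-1) ^ card (inversions Min (\<lambda>B. Min (\<sigma> ` B)) (odd_blocks A ds f))"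
proof -
  have "{(B, B'). B \<in> A \<and> B' \<in> A \<and> Min B < Min B' \<and> Min (\<sigma> ` B') < Min (\<sigma> ` B) \<and>
      snd (ds ! f B) \<and> snd (ds ! f B')} = inversions Min (\<lambda>B. Min (\<sigma> ` B)) (odd_blocks A ds f)"
    by (auto simp: inversions_def odd_blocks_def)
  then show ?thesis by (simp add: koszul_def)
qed

lemma koszul_id: "koszul A ds id f = 1"
proof -
  have "inversions Min (\<lambda>B. Min (id ` B)) U = {}" for U :: "nat set set"
    by (auto simp: inversions_def)
  then show ?thesis by (simp only: koszul_eq_inversions) simp
qed

locale block_partition =
  fixes n :: nat and A :: "nat set set"
  assumes partition: "partition_on {1..n} A"
begin

lemma finite_blocks: "finite A"
  using partition by (metis finite_UnionD finite_atLeastAtMost partition_onD1)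

lemma block_subset: "B \<in> A \<Longrightarrow> B \<subseteq> {1..n}"
  using partition by (auto simp: partition_on_def)

lemma finite_block: "B \<in> A \<Longrightarrow> finite B"
  using block_subset finite_subset by blast

lemma inj_on_Min_blocks: "inj_on Min A"
proof (rule inj_onI)
  fix B B' assume B: "B \<in> A" "B' \<in> A" "Min B = Min B'"
  have "B \<noteq> {}" "B' \<noteq> {}" using partition B by (auto simp: partition_on_def)
  then have "Min B \<in> B \<inter> B'" using B finite_block Min_in by (metis IntI)
  then show "B = B'" using partition B unfolding partition_on_def disjoint_def by blast
qed

lemma bij_betw_image_blocks:
  assumes "\<sigma> \<in> Sym_part n A"
  shows "bij_betw ((`) \<sigma>) A A"
proof -
  have "inj \<sigma>" using assms permutes_inj by (auto simp: Sym_part_def)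
  then have inj: "inj_on ((`) \<sigma>) A" by (simp add: inj_on_def inj_image_eq_iff)
  moreover have "(`) \<sigma> ` A = A"
    by (rule endo_inj_surj[OF finite_blocks _ inj]) (auto simp: Sym_part_image_block[OF assms])
  ultimately show ?thesis by (simp add: bij_betw_def)
qed

lemma obtain_preimage_block:
  assumes "\<sigma> \<in> Sym_part n A" "C \<in> A"
  obtains B where "B \<in> A" "C = \<sigma> ` B"
  using assms bij_betw_image_blocks by (metis bij_betw_def imageE)

lemma inv_into_image_block:
  assumes "\<sigma> \<in> Sym_part n A" "B \<in> A"
  shows "inv_into {1..n} \<sigma> ` (\<sigma> ` B) = B"
  using assms block_subset permutes_inj_on by (intro inv_into_image_cancel) (auto simp: Sym_part_def)

lemma inj_on_Min_image_blocks:
  assumes "\<sigma> \<in> Sym_part n A"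
  shows "inj_on (\<lambda>B. Min (\<sigma> ` B)) A"
  using comp_inj_on[of "(`) \<sigma>" A Min] bij_betw_image_blocks[OF assms] inj_on_Min_blocks
  by (simp add: bij_betw_def comp_def)

lemma tens_act_image:
  assumes "\<sigma> \<in> Sym_part n A" "B \<in> A"
  shows "tens_act n A \<sigma> f (\<sigma> ` B) = f B"
  using assms Sym_part_image_block inv_into_image_block by (simp add: tens_act_def)

lemma tens_act_unique:
  assumes \<sigma>: "\<sigma> \<in> Sym_part n A" and "g \<in> extensional A" and g: "\<And>B. B \<in> A \<Longrightarrow> g (\<sigma> ` B) = f B"
  shows "g = tens_act n A \<sigma> f"
proof (rule extensionalityI[OF \<open>g \<in> extensional A\<close>])
  show "tens_act n A \<sigma> f \<in> extensional A" by (simp add: tens_act_def)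
  fix C assume "C \<in> A"
  then obtain B where "B \<in> A" "C = \<sigma> ` B" using obtain_preimage_block[OF \<sigma>] by blast
  then show "g C = tens_act n A \<sigma> f C" using g tens_act_image[OF \<sigma>] by simp
qed

lemma tens_act_id: "f \<in> extensional A \<Longrightarrow> tens_act n A id f = f"
  using tens_act_unique[OF Sym_part_id, of f f] by simp

lemma tens_act_comp:
  assumes "\<sigma> \<in> Sym_part n A" "\<tau> \<in> Sym_part n A"
  shows "tens_act n A (\<sigma> \<circ> \<tau>) f = tens_act n A \<sigma> (tens_act n A \<tau> f)"
proof (rule tens_act_unique[symmetric])
  show "\<sigma> \<circ> \<tau> \<in> Sym_part n A" by (rule Sym_part_comp[OF assms])
  show "tens_act n A \<sigma> (tens_act n A \<tau> f) \<in> extensional A" by (simp add: tens_act_def)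
  fix B assume "B \<in> A"
  have "tens_act n A \<sigma> (tens_act n A \<tau> f) (\<sigma> ` \<tau> ` B) = tens_act n A \<tau> f (\<tau> ` B)"
    by (rule tens_act_image[OF assms(1) Sym_part_image_block[OF assms(2) \<open>B \<in> A\<close>]])
  also have "\<dots> = f B" by (rule tens_act_image[OF assms(2) \<open>B \<in> A\<close>])
  finally show "tens_act n A \<sigma> (tens_act n A \<tau> f) ((\<sigma> \<circ> \<tau>) ` B) = f B"
    by (simp only: image_comp)
qed

lemma tens_act_PiE:
  assumes \<sigma>: "\<sigma> \<in> Sym_part n A" and f: "f \<in> PiE A (\<lambda>_. {..<L})"
  shows "tens_act n A \<sigma> f \<in> PiE A (\<lambda>_. {..<L})"
proof -
  have "tens_act n A \<sigma> f C < L" if "C \<in> A" for C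
  proof -
    obtain B where "B \<in> A" "C = \<sigma> ` B" using obtain_preimage_block[OF \<sigma> \<open>C \<in> A\<close>] .
    then show ?thesis using f tens_act_image[OF \<sigma>] by auto
  qed
  then show ?thesis by (auto simp: PiE_iff tens_act_def)
qed

lemma tens_act_fixed_iff:
  assumes "\<sigma> \<in> Sym_part n A" "f \<in> extensional A"
  shows "tens_act n A \<sigma> f = f \<longleftrightarrow> (\<forall>B\<in>A. f (\<sigma> ` B) = f B)"
  using assms tens_act_image tens_act_unique by metis

lemma odd_blocks_tens_act:
  assumes \<sigma>: "\<sigma> \<in> Sym_part n A"
  shows "odd_blocks A ds (tens_act n A \<sigma> f) = (`) \<sigma> ` odd_blocks A ds f"
proof -
  have "odd_blocks A ds (tens_act n A \<sigma> f) = {C \<in> (`) \<sigma> ` A. snd (ds ! tens_act n A \<sigma> f C)}"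
    using bij_betw_image_blocks[OF \<sigma>] by (simp add: odd_blocks_def bij_betw_def)
  also have "\<dots> = (`) \<sigma> ` odd_blocks A ds f"
    using tens_act_image[OF \<sigma>] by (auto simp: odd_blocks_def)
  finally show ?thesis .
qed

text \<open>Both sides are signs of the permutation of the odd factors induced by \<sigma> \<circ> \<tau>, the right-hand
  side computed in two steps.\<close>
lemma koszul_cocycle:
  assumes \<sigma>: "\<sigma> \<in> Sym_part n A" and \<tau>: "\<tau> \<in> Sym_part n A"
  shows "koszul A ds (\<sigma> \<circ> \<tau>) f = koszul A ds \<sigma> (tens_act n A \<tau> f) * koszul A ds \<tau> f"
proof -
  define U where "U = odd_blocks A ds f"
  have "U \<subseteq> A" by (auto simp: U_def odd_blocks_def)
  then have fin: "finite U" and inj: "inj_on Min U" "inj_on (\<lambda>B. Min (\<tau> ` B)) U"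
    "inj_on (\<lambda>B. Min ((\<sigma> \<circ> \<tau>) ` B)) U" "inj_on ((`) \<tau>) U"
    using finite_subset[OF _ finite_blocks] inj_on_subset inj_on_Min_blocks
      inj_on_Min_image_blocks[OF \<tau>] inj_on_Min_image_blocks[OF Sym_part_comp[OF \<sigma> \<tau>]]
      bij_betw_image_blocks[OF \<tau>]
    by (auto simp: bij_betw_def)
  have "koszul A ds \<sigma> (tens_act n A \<tau> f)
      = (-1) ^ card (inversions Min (\<lambda>B. Min (\<sigma> ` B)) ((`) \<tau> ` U))"
    by (simp add: koszul_eq_inversions odd_blocks_tens_act[OF \<tau>] U_def)
  also have "\<dots> = (-1) ^ card (inversions (\<lambda>B. Min (\<tau> ` B)) (\<lambda>B. Min ((\<sigma> \<circ> \<tau>) ` B)) U)"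
    using card_inversions_image[OF inj(4)] by (simp add: comp_def image_comp)
  finally have "koszul A ds \<sigma> (tens_act n A \<tau> f)
      = (-1) ^ card (inversions (\<lambda>B. Min (\<tau> ` B)) (\<lambda>B. Min ((\<sigma> \<circ> \<tau>) ` B)) U)" .
  then show ?thesis
    unfolding koszul_eq_inversions[of A ds "\<sigma> \<circ> \<tau>"] koszul_eq_inversions[of A ds \<tau>] U_def[symmetric]
    using sign_inversions_trans[OF fin inj(1-3)] by (simp only: mult.commute)
qed

lemma tens_rho_comp:
  assumes \<sigma>: "\<sigma> \<in> Sym_part n A" and \<tau>: "\<tau> \<in> Sym_part n A" and f: "f \<in> tens_basis A ds"
  shows "tens_rho n A ds (\<sigma> \<circ> \<tau>) g f = (\<Sum>k\<in>tens_basis A ds. tens_rho n A ds \<sigma> g k * tens_rho n A ds \<tau> k f)"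
proof -
  have mem: "tens_act n A \<tau> f \<in> tens_basis A ds"
    using tens_act_PiE[OF \<tau>] f by (simp add: tens_basis_def)
  have fin: "finite (tens_basis A ds)" by (simp add: tens_basis_def finite_blocks finite_PiE)
  have "(\<Sum>k\<in>tens_basis A ds. tens_rho n A ds \<sigma> g k * tens_rho n A ds \<tau> k f)
      = (\<Sum>k\<in>tens_basis A ds. if k = tens_act n A \<tau> f then tens_rho n A ds \<sigma> g k * koszul A ds \<tau> f else 0)"
    by (intro sum.cong) (auto simp: tens_rho_eq)
  also have "\<dots> = tens_rho n A ds \<sigma> g (tens_act n A \<tau> f) * koszul A ds \<tau> f"
    using mem fin by (simp add: sum.delta')
  also have "\<dots> = tens_rho n A ds (\<sigma> \<circ> \<tau>) g f"
    by (simp add: tens_rho_eq tens_act_comp[OF \<sigma> \<tau>] koszul_cocycle[OF \<sigma> \<tau>])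
  finally show ?thesis ..
qed

lemma tens_wt_tens_act:
  assumes \<sigma>: "\<sigma> \<in> Sym_part n A"
  shows "tens_wt A ds (tens_act n A \<sigma> f) = tens_wt A ds f"
proof -
  have "tens_wt A ds (tens_act n A \<sigma> f) = (\<Sum>B\<in>A. fst (ds ! tens_act n A \<sigma> f (\<sigma> ` B)))"
    unfolding tens_wt_def by (rule sum.reindex_bij_betw[OF bij_betw_image_blocks[OF \<sigma>], symmetric])
  also have "\<dots> = tens_wt A ds f"
    by (simp add: tens_wt_def tens_act_image[OF \<sigma>])
  finally show ?thesis .
qed

lemma tens_par_tens_act:
  assumes \<sigma>: "\<sigma> \<in> Sym_part n A"
  shows "tens_par A ds (tens_act n A \<sigma> f) = tens_par A ds f"
proof -
  have "inj_on ((`) \<sigma>) (odd_blocks A ds f)"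
    using bij_betw_image_blocks[OF \<sigma>] by (auto simp: bij_betw_def odd_blocks_def intro: inj_on_subset)
  then show ?thesis by (simp add: tens_par_eq odd_blocks_tens_act[OF \<sigma>] card_image)
qed

lemma tens_graded_rep:
  assumes keys: "\<forall>(w, p)\<in>set ds. Poly_Mapping.keys w \<subseteq> {..<d}"
  shows "graded_rep d (Sym_part n A) (tens_basis A ds) (tens_rho n A ds) (tens_wt A ds) (tens_par A ds)"
  unfolding graded_rep_def
proof (intro conjI ballI)
  show "finite (tens_basis A ds)" by (simp add: tens_basis_def finite_blocks finite_PiE)
next
  fix f assume f: "f \<in> tens_basis A ds"
  have "Poly_Mapping.keys (fst (ds ! f B)) \<subseteq> {..<d}" if "B \<in> A" for B
  proof -
    have "ds ! f B \<in> set ds" using that f by (auto simp: tens_basis_def PiE_iff intro!: nth_mem)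
    then show ?thesis using bspec[OF keys] by (simp add: case_prod_beta)
  qed
  then show "Poly_Mapping.keys (tens_wt A ds f) \<subseteq> {..<d}"
    unfolding tens_wt_def using keys_sum[of "\<lambda>B. fst (ds ! f B)" A] by blast
next
  fix g f assume "g \<in> tens_basis A ds" "f \<in> tens_basis A ds"
  then show "tens_rho n A ds id g f = (if g = f then 1 else 0)"
    by (simp add: tens_rho_eq koszul_id tens_act_id tens_basis_def PiE_iff)
next
  fix \<sigma> \<tau> g f assume "\<sigma> \<in> Sym_part n A" "\<tau> \<in> Sym_part n A" "f \<in> tens_basis A ds"
  then show "tens_rho n A ds (\<sigma> \<circ> \<tau>) g f
      = (\<Sum>k\<in>tens_basis A ds. tens_rho n A ds \<sigma> g k * tens_rho n A ds \<tau> k f)"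
    by (rule tens_rho_comp)
next
  fix \<sigma> g f assume "\<sigma> \<in> Sym_part n A"
  then show "tens_rho n A ds \<sigma> g f \<noteq> 0 \<longrightarrow> tens_wt A ds g = tens_wt A ds f \<and> tens_par A ds g = tens_par A ds f"
    by (simp add: tens_rho_eq tens_wt_tens_act tens_par_tens_act)
qed

end

section \<open>Supertraces of partition-preserving permutations\<close>

lemma lookup_classD:
  "Poly_Mapping.lookup (classD ds) w
    = (\<Sum>i<length ds. if fst (ds ! i) = w then (if snd (ds ! i) then -1 else 1) else 0)"
  unfolding classD_def sum_list_sum_nth lookup_sum
  by (intro sum.cong) (auto simp: lessThan_atLeast0 case_prod_beta lookup_single when_def)

lemma sum_single_signed_nonzero:
  assumes h: "inj h" and \<eta>: "\<eta> = 1 \<or> \<eta> = -1" and D: "classD ds \<noteq> 0"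
  shows "(\<Sum>i<length ds. Poly_Mapping.single (h (fst (ds ! i))) (if snd (ds ! i) then \<eta> else (1::complex))) \<noteq> 0"
    (is "?Y \<noteq> 0")
proof -
  have lookup_Y: "Poly_Mapping.lookup ?Y (h w)
      = (\<Sum>i<length ds. if fst (ds ! i) = w then (if snd (ds ! i) then \<eta> else 1) else 0)" for w
    unfolding lookup_sum lookup_single by (intro sum.cong refl) (simp add: when_def inj_eq[OF h])
  show ?thesis
  proof (cases "\<eta> = -1")
    case True
    obtain w where "Poly_Mapping.lookup (classD ds) w \<noteq> 0"
      using D by (metis lookup_zero poly_mapping_eqI)
    moreover have "Poly_Mapping.lookup ?Y (h w) = Poly_Mapping.lookup (classD ds) w"
      unfolding lookup_Y lookup_classD by (simp only: \<open>\<eta> = -1\<close>)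
    ultimately show ?thesis by auto
  next
    case False
    then have "\<eta> = 1" using \<eta> by simp
    have "ds \<noteq> []" using D by (auto simp: classD_def)
    define w where "w = fst (ds ! 0)"
    have "Poly_Mapping.lookup ?Y (h w) = (\<Sum>i<length ds. of_bool (fst (ds ! i) = w))"
      unfolding lookup_Y by (simp only: \<open>\<eta> = 1\<close> if_cancel) (simp add: of_bool_def)
    also have "\<dots> = of_nat (card ({..<length ds} \<inter> {i. fst (ds ! i) = w}))" by simp
    also have "\<dots> \<noteq> 0"
    proof -
      have "0 \<in> {..<length ds} \<inter> {i. fst (ds ! i) = w}" using \<open>ds \<noteq> []\<close> by (simp add: w_def)
      then have "card ({..<length ds} \<inter> {i. fst (ds ! i) = w}) \<noteq> 0" by (auto simp: card_eq_0_iff)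
      then show ?thesis by simp
    qed
    finally show ?thesis by auto
  qed
qed

lemma inj_sum_const:
  assumes "finite U" "U \<noteq> {}"
  shows "inj (\<lambda>w :: 'a \<Rightarrow>\<^sub>0 int. \<Sum>_\<in>U. w)"
proof (rule injI)
  fix w w' :: "'a \<Rightarrow>\<^sub>0 int" assume eq: "(\<Sum>_\<in>U. w) = (\<Sum>_\<in>U. w')"
  have lookup: "Poly_Mapping.lookup (\<Sum>_\<in>U. v) k = int (card U) * Poly_Mapping.lookup v k"
    for v :: "'a \<Rightarrow>\<^sub>0 int" and k
    by (simp add: lookup_sum)
  have "int (card U) * Poly_Mapping.lookup w k = int (card U) * Poly_Mapping.lookup w' k" for k
    by (simp only: lookup[symmetric] eq)
  then show "w = w'" using assms by (intro poly_mapping_eqI) (simp add: card_gt_0_iff)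
qed

definition fixed_colourings :: "(nat \<Rightarrow> nat) \<Rightarrow> nat \<Rightarrow> nat set set \<Rightarrow> (nat set \<Rightarrow> nat) set" where
  "fixed_colourings \<sigma> L U = {f \<in> PiE U (\<lambda>_. {..<L}). \<forall>B\<in>U. f (\<sigma> ` B) = f B}"

definition fixed_term ::
    "((nat \<Rightarrow>\<^sub>0 int) \<times> bool) list \<Rightarrow> (nat \<Rightarrow> nat) \<Rightarrow> nat set set \<Rightarrow> (nat set \<Rightarrow> nat) \<Rightarrow> laur" where
  "fixed_term ds \<sigma> U f = Poly_Mapping.single (\<Sum>B\<in>U. fst (ds ! f B))
     ((-1) ^ card (odd_blocks U ds f) * (-1) ^ card (inversions Min (\<lambda>B. Min (\<sigma> ` B)) (odd_blocks U ds f)))"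

text \<open>The supertrace of \<sigma> on the tensor product of the factors indexed by a \<sigma>-stable set U of
  blocks: only the \<sigma>-fixed basis vectors contribute, each with its Koszul sign.\<close>
definition partial_trace :: "((nat \<Rightarrow>\<^sub>0 int) \<times> bool) list \<Rightarrow> (nat \<Rightarrow> nat) \<Rightarrow> nat set set \<Rightarrow> laur" where
  "partial_trace ds \<sigma> U = (\<Sum>f\<in>fixed_colourings \<sigma> (length ds) U. fixed_term ds \<sigma> U f)"

lemma partial_trace_empty: "partial_trace ds \<sigma> {} = 1"
  by (simp add: partial_trace_def fixed_colourings_def fixed_term_def odd_blocks_def inversions_def)

definition block_orbit :: "(nat \<Rightarrow> nat) \<Rightarrow> nat set \<Rightarrow> nat set set" where
  "block_orbit \<sigma> B = range (\<lambda>j. ((`) \<sigma> ^^ j) B)"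

lemma self_in_block_orbit: "B \<in> block_orbit \<sigma> B"
  unfolding block_orbit_def by (metis funpow_0 rangeI)

lemma image_in_block_orbit:
  assumes "C \<in> block_orbit \<sigma> B"
  shows "\<sigma> ` C \<in> block_orbit \<sigma> B"
proof -
  obtain j where "C = ((`) \<sigma> ^^ j) B" using assms by (auto simp: block_orbit_def)
  then have "\<sigma> ` C = ((`) \<sigma> ^^ Suc j) B" by simp
  then show ?thesis unfolding block_orbit_def by (rule range_eqI)
qed

lemma block_orbit_subset:
  assumes "B \<in> U" "\<forall>C\<in>U. \<sigma> ` C \<in> U"
  shows "block_orbit \<sigma> B \<subseteq> U"
proof -
  have "((`) \<sigma> ^^ j) B \<in> U" for j by (induction j) (use assms in auto)
  then show ?thesis by (auto simp: block_orbit_def)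
qed

lemma fixed_colourings_block_orbit:
  "fixed_colourings \<sigma> L (block_orbit \<sigma> B) = (\<lambda>i. \<lambda>C\<in>block_orbit \<sigma> B. i) ` {..<L}"
proof
  show "fixed_colourings \<sigma> L (block_orbit \<sigma> B) \<subseteq> (\<lambda>i. \<lambda>C\<in>block_orbit \<sigma> B. i) ` {..<L}"
  proof
    fix f assume f: "f \<in> fixed_colourings \<sigma> L (block_orbit \<sigma> B)"
    have "f (((`) \<sigma> ^^ j) B) = f B" for j
    proof (induction j)
      case (Suc j)
      have "((`) \<sigma> ^^ j) B \<in> block_orbit \<sigma> B" by (auto simp: block_orbit_def)
      then show ?case using f Suc by (simp add: fixed_colourings_def)
    qed simp
    then have "f = (\<lambda>C\<in>block_orbit \<sigma> B. f B)"
      using f by (intro extensionalityI[of _ "block_orbit \<sigma> B"])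
        (auto simp: fixed_colourings_def PiE_def block_orbit_def)
    moreover have "f B < L" using f self_in_block_orbit by (auto simp: fixed_colourings_def)
    ultimately show "f \<in> (\<lambda>i. \<lambda>C\<in>block_orbit \<sigma> B. i) ` {..<L}" by blast
  qed
  show "(\<lambda>i. \<lambda>C\<in>block_orbit \<sigma> B. i) ` {..<L} \<subseteq> fixed_colourings \<sigma> L (block_orbit \<sigma> B)"
    by (auto simp: fixed_colourings_def image_in_block_orbit)
qed

lemma partial_trace_block_orbit:
  "partial_trace ds \<sigma> (block_orbit \<sigma> B) = (\<Sum>i<length ds. Poly_Mapping.single (\<Sum>_\<in>block_orbit \<sigma> B. fst (ds ! i))
     (if snd (ds ! i)
      then (-1) ^ (card (block_orbit \<sigma> B) + card (inversions Min (\<lambda>C. Min (\<sigma> ` C)) (block_orbit \<sigma> B)))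
      else 1))"
proof -
  define Orb where "Orb = block_orbit \<sigma> B"
  define const where "const = (\<lambda>i::nat. \<lambda>C\<in>Orb. i)"
  have "inj_on const {..<length ds}"
    using self_in_block_orbit[of B \<sigma>] by (intro inj_onI) (metis Orb_def const_def restrict_apply')
  then have "partial_trace ds \<sigma> Orb = (\<Sum>i<length ds. fixed_term ds \<sigma> Orb (const i))"
    by (simp add: partial_trace_def fixed_colourings_block_orbit Orb_def const_def sum.reindex)
  also have "\<dots> = (\<Sum>i<length ds. Poly_Mapping.single (\<Sum>_\<in>Orb. fst (ds ! i))
      (if snd (ds ! i) then (-1) ^ (card Orb + card (inversions Min (\<lambda>C. Min (\<sigma> ` C)) Orb)) else 1))"
  proof (intro sum.cong refl)
    fix i
    have "odd_blocks Orb ds (const i) = (if snd (ds ! i) then Orb else {})"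
      by (auto simp: odd_blocks_def const_def)
    moreover have "(\<Sum>C\<in>Orb. fst (ds ! const i C)) = (\<Sum>_\<in>Orb. fst (ds ! i))"
      by (rule sum.cong) (auto simp: const_def)
    moreover have "inversions k k' {} = {}" for k k' :: "nat set \<Rightarrow> nat"
      by (simp add: inversions_def)
    ultimately show "fixed_term ds \<sigma> Orb (const i) = Poly_Mapping.single (\<Sum>_\<in>Orb. fst (ds ! i))
      (if snd (ds ! i) then (-1) ^ (card Orb + card (inversions Min (\<lambda>C. Min (\<sigma> ` C)) Orb)) else 1)"
      unfolding fixed_term_def by (simp add: power_add)
  qed
  finally show ?thesis by (simp only: Orb_def)
qed

context block_partition
begin

lemma tensor_class_eq_partial_trace:
  assumes \<sigma>: "\<sigma> \<in> Sym_part n A"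
  shows "tensor_class n A ds \<sigma> = partial_trace ds \<sigma> A"
proof -
  have fixed: "fixed_colourings \<sigma> (length ds) A = {f \<in> tens_basis A ds. tens_act n A \<sigma> f = f}"
    using tens_act_fixed_iff[OF \<sigma>] by (auto simp: fixed_colourings_def tens_basis_def PiE_def)
  have "tensor_class n A ds \<sigma>
      = (\<Sum>f\<in>tens_basis A ds. if tens_act n A \<sigma> f = f then fixed_term ds \<sigma> A f else 0)"
    unfolding tensor_class_def schar_def
    by (intro sum.cong) (auto simp: tens_rho_eq fixed_term_def tens_wt_def tens_par_eq koszul_eq_inversions)
  also have "\<dots> = partial_trace ds \<sigma> A"
    unfolding partial_trace_def fixed
    by (rule sum.inter_filter[symmetric]) (simp add: tens_basis_def finite_blocks finite_PiE)
  finally show ?thesis .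
qed

lemma tensor_class_in_K_T:
  assumes "\<sigma> \<in> Sym_part n A" "\<forall>(w, p)\<in>set ds. Poly_Mapping.keys w \<subseteq> {..<d}"
  shows "tensor_class n A ds \<sigma> \<in> K_T d"
  unfolding tensor_class_def
  by (rule schar_in_K_T[OF tens_graded_rep[OF assms(2)]]) (simp add: tens_rho_eq koszul_def)

lemma bij_betw_image_odd_blocks:
  assumes \<sigma>: "\<sigma> \<in> Sym_part n A" and "U \<subseteq> A" and U: "\<forall>B\<in>U. \<sigma> ` B \<in> U"
    and f: "\<And>B. B \<in> U \<Longrightarrow> f (\<sigma> ` B) = f B"
  shows "bij_betw ((`) \<sigma>) (odd_blocks U ds f) (odd_blocks U ds f)"
proof -
  have "odd_blocks U ds f \<subseteq> A" using \<open>U \<subseteq> A\<close> by (auto simp: odd_blocks_def)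
  then have inj: "inj_on ((`) \<sigma>) (odd_blocks U ds f)"
    using bij_betw_image_blocks[OF \<sigma>] by (auto simp: bij_betw_def intro: inj_on_subset)
  moreover have "(`) \<sigma> ` odd_blocks U ds f = odd_blocks U ds f"
    using finite_subset[OF \<open>U \<subseteq> A\<close> finite_blocks] U f
    by (intro endo_inj_surj[OF _ _ inj]) (auto simp: odd_blocks_def)
  ultimately show ?thesis by (simp add: bij_betw_def)
qed

lemma fixed_term_Un:
  assumes \<sigma>: "\<sigma> \<in> Sym_part n A" and "U \<subseteq> A" "V \<subseteq> A" "U \<inter> V = {}"
    and U: "\<forall>B\<in>U. \<sigma> ` B \<in> U" and V: "\<forall>B\<in>V. \<sigma> ` B \<in> V"
    and f: "f \<in> fixed_colourings \<sigma> L (U \<union> V)"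
  shows "fixed_term ds \<sigma> (U \<union> V) f = fixed_term ds \<sigma> U (restrict f U) * fixed_term ds \<sigma> V (restrict f V)"
proof -
  define Y1 where "Y1 = odd_blocks U ds f"
  define Y2 where "Y2 = odd_blocks V ds f"
  have "finite U" "finite V" using assms(2,3) finite_blocks finite_subset by auto
  then have fin: "finite U" "finite V" "finite Y1" "finite Y2"
    by (simp_all add: Y1_def Y2_def odd_blocks_def)
  have disj: "Y1 \<inter> Y2 = {}" using \<open>U \<inter> V = {}\<close> by (auto simp: Y1_def Y2_def odd_blocks_def)
  have fU: "f (\<sigma> ` B) = f B" if "B \<in> U \<union> V" for B
    using f that by (simp add: fixed_colourings_def)
  have "bij_betw ((`) \<sigma>) Y1 Y1" "bij_betw ((`) \<sigma>) Y2 Y2"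
    unfolding Y1_def Y2_def using assms(2,3) U V fU
    by (auto intro!: bij_betw_image_odd_blocks[OF \<sigma>])
  moreover have "inj_on Min (Y1 \<union> Y2)"
    using assms(2,3) by (intro inj_on_subset[OF inj_on_Min_blocks]) (auto simp: Y1_def Y2_def odd_blocks_def)
  ultimately have sign: "(-1::complex) ^ card (inversions Min (\<lambda>B. Min (\<sigma> ` B)) (Y1 \<union> Y2))
      = (-1) ^ card (inversions Min (\<lambda>B. Min (\<sigma> ` B)) Y1) * (-1) ^ card (inversions Min (\<lambda>B. Min (\<sigma> ` B)) Y2)"
    by (rule sign_inversions_Un[OF fin(3,4) disj])
  have "odd_blocks (U \<union> V) ds f = Y1 \<union> Y2" "odd_blocks U ds (restrict f U) = Y1"
    "odd_blocks V ds (restrict f V) = Y2"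
    by (auto simp: odd_blocks_def Y1_def Y2_def)
  moreover have "(\<Sum>B\<in>U \<union> V. fst (ds ! f B))
      = (\<Sum>B\<in>U. fst (ds ! restrict f U B)) + (\<Sum>B\<in>V. fst (ds ! restrict f V B))"
    using sum.union_disjoint[OF fin(1,2) \<open>U \<inter> V = {}\<close>] by simp
  ultimately show ?thesis
    using card_Un_disjoint[OF fin(3,4) disj]
    by (simp add: fixed_term_def mult_single sign power_add mult_ac)
qed

lemma partial_trace_Un:
  assumes \<sigma>: "\<sigma> \<in> Sym_part n A" and "U \<subseteq> A" "V \<subseteq> A" and disj: "U \<inter> V = {}"
    and U: "\<forall>B\<in>U. \<sigma> ` B \<in> U" and V: "\<forall>B\<in>V. \<sigma> ` B \<in> V"
  shows "partial_trace ds \<sigma> (U \<union> V) = partial_trace ds \<sigma> U * partial_trace ds \<sigma> V"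
proof -
  let ?F = "fixed_colourings \<sigma> (length ds)"
  have "partial_trace ds \<sigma> (U \<union> V) = (\<Sum>(a, b)\<in>?F U \<times> ?F V. fixed_term ds \<sigma> U a * fixed_term ds \<sigma> V b)"
    unfolding partial_trace_def
  proof (rule sum.reindex_bij_witness[where i = "\<lambda>(a, b) B. if B \<in> U then a B else b B"
        and j = "\<lambda>f. (restrict f U, restrict f V)"])
    fix f assume f: "f \<in> ?F (U \<union> V)"
    then show "(\<lambda>(a, b) B. if B \<in> U then a B else b B) (restrict f U, restrict f V) = f"
      by (auto simp: fixed_colourings_def PiE_def extensional_def)
    show "(restrict f U, restrict f V) \<in> ?F U \<times> ?F V"
      using f U V by (auto simp: fixed_colourings_def)
    show "(case (restrict f U, restrict f V) of (a, b) \<Rightarrow> fixed_term ds \<sigma> U a * fixed_term ds \<sigma> V b)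
        = fixed_term ds \<sigma> (U \<union> V) f"
      using fixed_term_Un[OF assms f] by simp
  next
    fix p assume "p \<in> ?F U \<times> ?F V"
    then obtain a b where p: "p = (a, b)" "a \<in> ?F U" "b \<in> ?F V" by blast
    then show "(\<lambda>f. (restrict f U, restrict f V)) ((\<lambda>(a, b) B. if B \<in> U then a B else b B) p) = p"
      using disj by (auto simp: fixed_colourings_def PiE_def extensional_def fun_eq_iff)
    show "(\<lambda>(a, b) B. if B \<in> U then a B else b B) p \<in> ?F (U \<union> V)"
      using p U V disj by (auto simp: fixed_colourings_def PiE_def extensional_def)
  qed
  also have "\<dots> = partial_trace ds \<sigma> U * partial_trace ds \<sigma> V"
    by (simp add: partial_trace_def sum_product sum.cartesian_product)
  finally show ?thesis .
qed

lemma partial_trace_block_orbit_nonzero: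
  assumes \<sigma>: "\<sigma> \<in> Sym_part n A" and "B \<in> A" and D: "classD ds \<noteq> 0"
  shows "partial_trace ds \<sigma> (block_orbit \<sigma> B) \<noteq> 0"
  unfolding partial_trace_block_orbit
proof (intro sum_single_signed_nonzero inj_sum_const D)
  have "block_orbit \<sigma> B \<subseteq> A"
    using Sym_part_image_block[OF \<sigma>] \<open>B \<in> A\<close> by (intro block_orbit_subset) auto
  then show "finite (block_orbit \<sigma> B)" using finite_blocks finite_subset by blast
  show "block_orbit \<sigma> B \<noteq> {}" using self_in_block_orbit by blast
  show "(-1::complex) ^ m = 1 \<or> (-1::complex) ^ m = -1" for m
    by (cases "even m") (simp_all add: neg_one_even_power neg_one_odd_power)
qed

lemma image_block_closed_Diff:
  assumes \<sigma>: "\<sigma> \<in> Sym_part n A" and "U \<subseteq> A" "W \<subseteq> U"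
    and U: "\<forall>B\<in>U. \<sigma> ` B \<in> U" and W: "\<forall>B\<in>W. \<sigma> ` B \<in> W"
  shows "\<forall>B\<in>U - W. \<sigma> ` B \<in> U - W"
proof
  fix B assume B: "B \<in> U - W"
  have inj: "inj_on ((`) \<sigma>) A" using bij_betw_image_blocks[OF \<sigma>] by (simp add: bij_betw_def)
  have W_eq: "(`) \<sigma> ` W = W"
    using assms finite_subset[OF _ finite_blocks] inj_on_subset[OF inj] W
    by (intro endo_inj_surj) auto
  have "\<sigma> ` B \<notin> W"
  proof
    assume "\<sigma> ` B \<in> W"
    then obtain B' where "B' \<in> W" "\<sigma> ` B = \<sigma> ` B'" using W_eq by (metis imageE)
    then have "B = B'" using inj B assms by (meson DiffD1 inj_onD subsetD)
    then show False using B \<open>B' \<in> W\<close> by blast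
  qed
  then show "\<sigma> ` B \<in> U - W" using B U by blast
qed

lemma partial_trace_nonzero:
  assumes \<sigma>: "\<sigma> \<in> Sym_part n A" and D: "classD ds \<noteq> 0"
    and "U \<subseteq> A" "\<forall>B\<in>U. \<sigma> ` B \<in> U"
  shows "partial_trace ds \<sigma> U \<noteq> 0"
  using finite_subset[OF \<open>U \<subseteq> A\<close> finite_blocks] assms(3,4)
proof (induction U rule: finite_psubset_induct)
  case (psubset U)
  show ?case
  proof (cases "U = {}")
    case False
    then obtain B where "B \<in> U" by blast
    define Orb where "Orb = block_orbit \<sigma> B"
    have "Orb \<subseteq> U" unfolding Orb_def using \<open>B \<in> U\<close> psubset.prems(2) by (rule block_orbit_subset)
    have Orb: "\<forall>C\<in>Orb. \<sigma> ` C \<in> Orb" by (simp add: Orb_def image_in_block_orbit)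
    have "U - Orb \<subset> U" using \<open>B \<in> U\<close> self_in_block_orbit[of B \<sigma>] unfolding Orb_def by blast
    have rest: "\<forall>C\<in>U - Orb. \<sigma> ` C \<in> U - Orb"
      using image_block_closed_Diff[OF \<sigma> _ \<open>Orb \<subseteq> U\<close>] psubset.prems Orb by blast
    have "partial_trace ds \<sigma> (Orb \<union> (U - Orb)) = partial_trace ds \<sigma> Orb * partial_trace ds \<sigma> (U - Orb)"
      using \<open>Orb \<subseteq> U\<close> psubset.prems(1) by (intro partial_trace_Un[OF \<sigma> _ _ _ Orb rest]) auto
    moreover have "Orb \<union> (U - Orb) = U" using \<open>Orb \<subseteq> U\<close> by blast
    moreover have "partial_trace ds \<sigma> (U - Orb) \<noteq> 0"
      using psubset.IH[OF \<open>U - Orb \<subset> U\<close> _ rest] psubset.prems(1) by blast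
    moreover have "partial_trace ds \<sigma> Orb \<noteq> 0"
      unfolding Orb_def using partial_trace_block_orbit_nonzero[OF \<sigma> _ D] \<open>B \<in> U\<close> psubset.prems by blast
    ultimately show ?thesis by simp
  qed (simp add: partial_trace_empty)
qed

end

theorem lemma2p3:
  fixes d n :: nat and A :: "nat set set" and ds :: "((nat \<Rightarrow>\<^sub>0 int) \<times> bool) list"
  assumes "partition_on {1..n} A"
    and "\<forall>(w, p)\<in>set ds. Poly_Mapping.keys w \<subseteq> {..<d}"
    and "classD ds \<noteq> 0"
  shows "unit_loc d (Sym_part n A) (tensor_class n A ds)"
proof -
  interpret block_partition n A by (rule block_partition.intro[OF assms(1)])
  show ?thesis
  proof (rule unit_loc_if_nonzero_values)
    show "supercharacter d (Sym_part n A) (tensor_class n A ds)"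
      unfolding tensor_class_def by (rule supercharacter_schar[OF tens_graded_rep[OF assms(2)]])
    show "finite (Sym_part n A)" by (rule finite_Sym_part)
    show "id \<in> Sym_part n A" by (rule Sym_part_id)
    fix \<sigma> assume \<sigma>: "\<sigma> \<in> Sym_part n A"
    show "tensor_class n A ds \<sigma> \<in> K_T d" by (rule tensor_class_in_K_T[OF \<sigma> assms(2)])
    show "tensor_class n A ds \<sigma> \<noteq> 0"
      unfolding tensor_class_eq_partial_trace[OF \<sigma>]
      using partial_trace_nonzero[OF \<sigma> assms(3)] Sym_part_image_block[OF \<sigma>] by blast
  qed
qed

end
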